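(* Let $d\ge1$ and let $u\in C^1([0,1];\ell^2((h\mathbb Z)^d))$ be a solution to $\partial_tu_j=\Delta_{\mathrm d}u_j+V_ju_j$ on $(h\mathbb Z)^d\times[0,1]$ with $V$ real-valued and bounded, and assume that for a fixed $\mu>0$, $$h^d\sum_{j\in\mathbb Z^d}\prod_{k=1}^d\frac{K_{j_k\mu}\big(\frac{2}{eh^2}\big)}{K_0\big(\frac{2}{eh^2}\big)}\big(|u_j(0)|^2+|u_j(1)|^2\big)<\infty .$$ Then there exists $h_0>0$ such that for $h\in(0,h_0)$ and $R>1$ satisfying $Rh\ge\frac{2}{e\mu}$, $$h^d\int_0^1\sum_{j\in\mathbb Z^d,\ R-2<|hj|<R+1}|u_j(t)|^2\,dt\le C\exp\Big(-\mu c_0\Big(\frac Rh\log(Rh)+\frac Rh\log\mu\Big)\Big)$$ for some positive constants $c_0$ and $C$ independent of $h$ and $R$.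
   Context: Lattice functions on $(h\mathbb Z)^d$ are indexed by $j\in\mathbb Z^d$ with $u_j(t)=u(hj,t)$; $\Delta_{\mathrm d}f_j:=h^{-2}\sum_{k=1}^d(f_{j+e_k}-2f_j+f_{j-e_k})$; $|\cdot|$ is the Euclidean norm. $K_\nu$ is the Macdonald function $K_\nu(z)=\int_0^\infty e^{-z\cosh s}\cosh(\nu s)\,ds$, $z>0$. *)

theory Defs
  imports "HOL-Analysis.Analysis"
begin

definition macdonaldK :: "real \<Rightarrow> real \<Rightarrow> real" where
  "macdonaldK \<nu> z = integral {0..} (\<lambda>s. exp (- z * cosh s) * cosh (\<nu> * s))"

definition lat_norm :: "int ^ 'd::finite \<Rightarrow> real" where
  "lat_norm j = sqrt (\<Sum>k\<in>UNIV. (real_of_int (j $ k))\<^sup>2)"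

definition disc_lap :: "real \<Rightarrow> (int ^ 'd::finite \<Rightarrow> complex) \<Rightarrow> int ^ 'd \<Rightarrow> complex" where
  "disc_lap h f j = (1 / complex_of_real (h\<^sup>2)) *
     (\<Sum>k\<in>UNIV. f (j + axis k 1) - 2 * f j + f (j - axis k 1))"

definition in_l2 :: "('i \<Rightarrow> complex) \<Rightarrow> bool" where
  "in_l2 f \<longleftrightarrow> (\<lambda>j. (cmod (f j))\<^sup>2) summable_on UNIV"

definition l2norm :: "('i \<Rightarrow> complex) \<Rightarrow> real" where
  "l2norm f = sqrt (infsum (\<lambda>j. (cmod (f j))\<^sup>2) UNIV)"

definition is_C1_l2_solution ::
  "real \<Rightarrow> (real \<Rightarrow> int ^ 'd::finite \<Rightarrow> real) \<Rightarrow> (real \<Rightarrow> int ^ 'd \<Rightarrow> complex) \<Rightarrow> bool" where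
  "is_C1_l2_solution h V u \<longleftrightarrow>
    (\<exists>u'. (\<forall>t\<in>{0..1}. in_l2 (u t) \<and> in_l2 (u' t))
      \<and> (\<forall>t\<in>{0..1}. ((\<lambda>s. l2norm (\<lambda>j. (u s j - u t j) / complex_of_real (s - t) - u' t j))
                        \<longlongrightarrow> 0) (at t within {0..1}))
      \<and> (\<forall>t\<in>{0..1}. ((\<lambda>s. l2norm (\<lambda>j. u' s j - u' t j)) \<longlongrightarrow> 0) (at t within {0..1}))
      \<and> (\<forall>t\<in>{0..1}. \<forall>j. u' t j = disc_lap h (u t) j + complex_of_real (V t j) * u t j))"

end

theory Submission
  imports Defs
begin

text \<open>For the truncated weights
  \<open>\<phi>(j) = \<Prod>\<^sub>k cosh (\<lambda> min |j\<^sub>k| N)\<close> one has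
  \<open>\<phi>(j + e\<^sub>k) + \<phi>(j - e\<^sub>k) \<le> 2 cosh \<lambda> \<phi>(j)\<close>, so summation by parts turns the equation into
  \<open>E' \<le> (2L + 2d (cosh \<lambda> - 1)/h\<^sup>2) E\<close> for \<open>E(t) = \<Sum> \<phi> |u(t)|\<^sup>2\<close>, and Gronwall bounds \<open>E(1)\<close> by
  \<open>E(0)\<close>. Splitting the integral defining \<open>K\<^sub>\<nu>(z)\<close> at \<open>s = \<lambda>/\<mu>\<close> gives
  \<open>cosh (\<lambda> j) \<le> 2 exp (z (cosh (2\<lambda>/\<mu>) - 1)) K\<^bsub>j\<mu>\<^esub>(z)/K\<^sub>0(z)\<close>, so \<open>E(0)\<close> is controlled by the
  Macdonald-weighted norm of the data. On the annulus \<open>\<phi> \<ge> 2\<^sup>-\<^sup>d exp (\<lambda> (R - 2)/h)\<close>; choosing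
  \<open>\<lambda> \<approx> log (1 + \<epsilon> R h \<mu>)\<close> balances the gain \<open>\<lambda> R/h\<close> against the losses of order
  \<open>(cosh \<lambda> - 1)/h\<^sup>2\<close> and yields the decay \<open>exp (- c (R/h) log (R h \<mu>))\<close>.\<close>

lemma cosh_le_exp_abs: "cosh (x::real) \<le> exp \<bar>x\<bar>"
  unfolding cosh_def by (cases "x \<ge> 0") (auto simp: divide_simps)

lemma exp_abs_div2_le_cosh: "exp \<bar>x\<bar> / 2 \<le> cosh (x::real)"
  unfolding cosh_def by (cases "x \<ge> 0") (auto simp: divide_simps)

lemma cosh_mono_abs: "\<bar>x\<bar> \<le> \<bar>y\<bar> \<Longrightarrow> cosh (x::real) \<le> cosh y"
  by (metis cosh_real_abs cosh_real_nonneg_le_iff abs_ge_zero)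

lemma square_div4_le_cosh: "(s::real)\<^sup>2 / 4 \<le> cosh s"
proof -
  have "1 + \<bar>s\<bar> + \<bar>s\<bar>\<^sup>2 / 2 \<le> exp \<bar>s\<bar>" by (rule exp_lower_Taylor_quadratic) simp
  with exp_abs_div2_le_cosh[of s] show ?thesis by simp
qed

subsection \<open>The Macdonald function\<close>

lemma macdonald_integrand_bound:
  fixes z s \<nu> :: real
  assumes z: "z > 0" and s: "s \<ge> 0"
  shows "\<bar>exp (- z * cosh s) * cosh (\<nu> * s)\<bar> \<le> exp ((\<bar>\<nu>\<bar> + 1)\<^sup>2 / z) * exp (- s)"
proof -
  have quadratic: "\<bar>\<nu>\<bar> * s - z * (s\<^sup>2 / 4) \<le> (\<bar>\<nu>\<bar> + 1)\<^sup>2 / z - s"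
  proof -
    have "0 \<le> ((\<bar>\<nu>\<bar> + 1) - z * s / 2)\<^sup>2" by simp
    hence "(\<bar>\<nu>\<bar> + 1) * s - z * (s\<^sup>2 / 4) \<le> (\<bar>\<nu>\<bar> + 1)\<^sup>2 / z"
      using z by (simp add: field_simps power2_eq_square)
    thus ?thesis by (simp add: algebra_simps)
  qed
  have "cosh (\<nu> * s) \<le> exp (\<bar>\<nu>\<bar> * s)"
    using cosh_le_exp_abs[of "\<nu> * s"] s by (simp add: abs_mult)
  moreover have "exp (- z * cosh s) \<le> exp (- z * (s\<^sup>2 / 4))"
    using square_div4_le_cosh[of s] z by simp
  ultimately have "\<bar>exp (- z * cosh s) * cosh (\<nu> * s)\<bar> \<le> exp (- z * (s\<^sup>2 / 4)) * exp (\<bar>\<nu>\<bar> * s)"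
    by (simp add: mult_mono)
  also have "\<dots> \<le> exp ((\<bar>\<nu>\<bar> + 1)\<^sup>2 / z - s)"
    using quadratic by (simp add: exp_add[symmetric])
  finally show ?thesis by (simp add: exp_diff exp_minus field_simps)
qed

lemma macdonald_integrable:
  fixes z c \<nu> :: real
  assumes z: "z > 0" and c: "c \<ge> 0"
  shows "(\<lambda>s. exp (- z * cosh s) * cosh (\<nu> * s)) integrable_on {c..}"
proof (rule measurable_bounded_by_integrable_imp_integrable_real
    [where g = "\<lambda>s. exp ((\<bar>\<nu>\<bar> + 1)\<^sup>2 / z) * exp (- s)"])
  show "(\<lambda>s. exp (- z * cosh s) * cosh (\<nu> * s)) \<in> borel_measurable (lebesgue_on {c..})"
    by (intro continuous_imp_measurable_on_sets_lebesgue continuous_intros) auto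
  show "(\<lambda>s. exp ((\<bar>\<nu>\<bar> + 1)\<^sup>2 / z) * exp (- s)) integrable_on {c..}"
    using integrable_on_exp_minus_to_infinity[of 1 c] by simp
  show "\<bar>exp (- z * cosh s) * cosh (\<nu> * s)\<bar> \<le> exp ((\<bar>\<nu>\<bar> + 1)\<^sup>2 / z) * exp (- s)"
    if "s \<in> {c..}" for s
    using macdonald_integrand_bound[OF z, of s \<nu>] that c by auto
qed auto

definition macdonald0_integrand :: "real \<Rightarrow> real \<Rightarrow> real" where
  "macdonald0_integrand z s = exp (- z * cosh s)"

lemma macdonald0_integrand_integrable_on_interval:
  "macdonald0_integrand z integrable_on {a..b}"
  unfolding macdonald0_integrand_def by (intro integrable_continuous_interval continuous_intros)

lemma macdonald0_integrand_integrable_on_tail: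
  "z > 0 \<Longrightarrow> a \<ge> 0 \<Longrightarrow> macdonald0_integrand z integrable_on {a..}"
  using macdonald_integrable[of z a 0] unfolding macdonald0_integrand_def by simp

lemma macdonaldK_ge_cosh_mult_tail:
  fixes z a \<nu> :: real
  assumes z: "z > 0" and a: "a > 0"
  shows "cosh (\<nu> * a) * integral {a..} (macdonald0_integrand z) \<le> macdonaldK \<nu> z"
proof -
  let ?f = "\<lambda>s. exp (- z * cosh s) * cosh (\<nu> * s)"
  have "integral {a..} (\<lambda>s. cosh (\<nu> * a) * macdonald0_integrand z s) \<le> integral {a..} ?f"
  proof (rule integral_le)
    show "(\<lambda>s. cosh (\<nu> * a) * macdonald0_integrand z s) integrable_on {a..}"
      using macdonald0_integrand_integrable_on_tail[OF z] a by simp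
    show "?f integrable_on {a..}" using macdonald_integrable[OF z] a by simp
    show "cosh (\<nu> * a) * macdonald0_integrand z s \<le> ?f s" if "s \<in> {a..}" for s
    proof -
      have "\<bar>\<nu> * a\<bar> \<le> \<bar>\<nu> * s\<bar>" using that a by (simp add: abs_mult mult_left_mono)
      hence "cosh (\<nu> * a) \<le> cosh (\<nu> * s)" by (rule cosh_mono_abs)
      thus ?thesis unfolding macdonald0_integrand_def by (simp add: mult.commute)
    qed
  qed
  also have "\<dots> \<le> integral {0..} ?f"
    by (rule integral_subset_le) (use a z macdonald_integrable in auto)
  finally show ?thesis unfolding macdonaldK_def by simp
qed

lemma macdonaldK0_split:
  fixes z a :: real
  assumes z: "z > 0" and a: "a > 0"
  shows "macdonaldK 0 z
    = integral {0..a} (macdonald0_integrand z) + integral {a..} (macdonald0_integrand z)"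
proof -
  have "(macdonald0_integrand z has_integral
          integral {0..a} (macdonald0_integrand z) + integral {a..} (macdonald0_integrand z))
        ({0..a} \<union> {a..})"
    using macdonald0_integrand_integrable_on_interval macdonald0_integrand_integrable_on_tail[OF z] a
    by (intro has_integral_Un) (auto simp: integrable_integral max_def)
  moreover have "{0..a} \<union> {a..} = {0::real..}" using a by auto
  ultimately show ?thesis
    unfolding macdonaldK_def macdonald0_integrand_def by (simp add: integral_unique)
qed

lemma macdonald0_integrand_head_le:
  assumes "z > 0" "a > 0"
  shows "integral {0..a} (macdonald0_integrand z) \<le> a * exp (- z)"
proof -
  have "integral {0..a} (macdonald0_integrand z) \<le> integral {0..a} (\<lambda>s. exp (- z))"
    using macdonald0_integrand_integrable_on_interval cosh_real_ge_1 assms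
    by (intro integral_le) (auto simp: macdonald0_integrand_def)
  thus ?thesis using assms by simp
qed

lemma macdonald0_integrand_tail_ge:
  assumes z: "z > 0" and a: "a > 0"
  shows "a * exp (- z * cosh (2 * a)) \<le> integral {a..} (macdonald0_integrand z)"
proof -
  have "a * exp (- z * cosh (2 * a)) = integral {a..2 * a} (\<lambda>s. exp (- z * cosh (2 * a)))"
    using a by simp
  also have "\<dots> \<le> integral {a..2 * a} (macdonald0_integrand z)"
    using macdonald0_integrand_integrable_on_interval a z
    by (intro integral_le) (auto simp: macdonald0_integrand_def cosh_real_nonneg_le_iff)
  also have "\<dots> \<le> integral {a..} (macdonald0_integrand z)"
    using macdonald0_integrand_integrable_on_interval macdonald0_integrand_integrable_on_tail[OF z] a
    by (intro integral_subset_le) (auto simp: macdonald0_integrand_def)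
  finally show ?thesis .
qed

lemma macdonaldK_ratio_ge:
  fixes z a \<nu> :: real
  assumes z: "z > 0" and a: "a > 0"
  shows "cosh (\<nu> * a) * exp (- z * (cosh (2 * a) - 1)) / 2 \<le> macdonaldK \<nu> z / macdonaldK 0 z"
proof -
  define I where "I = integral {0..a} (macdonald0_integrand z)"
  define T where "T = integral {a..} (macdonald0_integrand z)"
  define b where "b = a * exp (- z * cosh (2 * a))"
  define c where "c = a * exp (- z)"
  have I0: "I \<ge> 0" unfolding I_def macdonald0_integrand_def
    by (intro integral_nonneg integrable_continuous_interval continuous_intros) auto
  have Ic: "I \<le> c" unfolding I_def c_def using macdonald0_integrand_head_le z a by auto
  have bT: "b \<le> T" unfolding T_def b_def using macdonald0_integrand_tail_ge z a by auto
  have b0: "b > 0" unfolding b_def using a by simp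
  have bc: "b \<le> c" unfolding b_def c_def using cosh_real_ge_1[of "2 * a"] z a by simp
  have "exp (- z * (cosh (2 * a) - 1)) / 2 = b / (2 * c)"
    unfolding b_def c_def using a
    by (simp add: algebra_simps exp_minus field_simps exp_diff exp_add[symmetric])
  also have "\<dots> \<le> b / (c + b)"
    using bc b0 by (intro divide_left_mono) auto
  also have "\<dots> \<le> T / (c + T)"
    using bT b0 bc by (simp add: divide_simps mult_right_mono algebra_simps)
  also have "\<dots> \<le> T / (I + T)"
    using Ic I0 bT b0 by (intro divide_left_mono) auto
  finally have "exp (- z * (cosh (2 * a) - 1)) / 2 \<le> T / (I + T)" .
  hence "cosh (\<nu> * a) * (exp (- z * (cosh (2 * a) - 1)) / 2) \<le> cosh (\<nu> * a) * (T / (I + T))"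
    by (rule mult_left_mono) simp
  also have "\<dots> \<le> macdonaldK \<nu> z / macdonaldK 0 z"
    using macdonaldK_ge_cosh_mult_tail[OF z a, of \<nu>] macdonaldK0_split[OF z a] I0 bT b0
    unfolding I_def[symmetric] T_def[symmetric] by (simp add: divide_right_mono)
  finally show ?thesis by simp
qed

lemma cosh_le_macdonaldK_ratio:
  fixes lam \<mu> z :: real
  assumes lam: "lam > 0" and mu: "\<mu> > 0" and z: "z > 0"
  shows "cosh (lam * n)
    \<le> 2 * exp (z * (cosh (2 * lam / \<mu>) - 1)) * (macdonaldK (n * \<mu>) z / macdonaldK 0 z)"
proof -
  define x where "x = z * (cosh (2 * lam / \<mu>) - 1)"
  have "cosh (lam * n) * exp (- x) / 2 \<le> macdonaldK (n * \<mu>) z / macdonaldK 0 z"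
    using macdonaldK_ratio_ge[OF z, of "lam / \<mu>" "n * \<mu>"] lam mu unfolding x_def
    by (simp add: mult.commute)
  hence "cosh (lam * n) * exp (- x) \<le> 2 * (macdonaldK (n * \<mu>) z / macdonaldK 0 z)"
    by linarith
  hence "exp x * (cosh (lam * n) * exp (- x)) \<le> exp x * (2 * (macdonaldK (n * \<mu>) z / macdonaldK 0 z))"
    by (rule mult_left_mono) simp
  moreover have "exp x * (cosh (lam * n) * exp (- x)) = cosh (lam * n)" by (simp add: exp_minus)
  ultimately show ?thesis unfolding x_def by (simp add: ac_simps)
qed

subsection \<open>Truncated hyperbolic weights\<close>

text \<open>Truncating at \<open>N\<close> keeps the weight bounded, so the weighted energy of an \<open>\<ell>\<^sup>2\<close> function is
  finite, while the shift inequality \<open>trunc_cosh_shift_le\<close> survives the truncation.\<close>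

definition trunc_cosh :: "real \<Rightarrow> real \<Rightarrow> int \<Rightarrow> real" where
  "trunc_cosh lam N n = cosh (lam * min (real_of_int \<bar>n\<bar>) N)"

definition cosh_weight :: "real \<Rightarrow> real \<Rightarrow> int ^ 'd::finite \<Rightarrow> real" where
  "cosh_weight lam N j = (\<Prod>k\<in>UNIV. trunc_cosh lam N (j $ k))"

lemma trunc_cosh_ge_1: "trunc_cosh lam N n \<ge> 1"
  unfolding trunc_cosh_def by (rule cosh_real_ge_1)

lemma trunc_cosh_le_cap: "lam \<ge> 0 \<Longrightarrow> N \<ge> 0 \<Longrightarrow> trunc_cosh lam N n \<le> cosh (lam * N)"
  unfolding trunc_cosh_def by (rule cosh_mono_abs) (auto simp: abs_mult intro!: mult_left_mono)

lemma trunc_cosh_le_cosh: "lam \<ge> 0 \<Longrightarrow> N \<ge> 0 \<Longrightarrow> trunc_cosh lam N n \<le> cosh (lam * n)"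
  unfolding trunc_cosh_def by (rule cosh_mono_abs) (auto simp: abs_mult intro!: mult_left_mono)

lemma trunc_cosh_eq_cosh: "lam \<ge> 0 \<Longrightarrow> \<bar>n\<bar> \<le> N \<Longrightarrow> trunc_cosh lam N n = cosh (lam * n)"
  unfolding trunc_cosh_def by (metis cosh_real_abs abs_mult abs_of_nonneg min.absorb1 of_int_abs)

lemma trunc_cosh_shift_le:
  assumes lam: "lam \<ge> 0" and N: "N \<ge> 0"
  shows "trunc_cosh lam N (n + 1) + trunc_cosh lam N (n - 1) \<le> 2 * cosh lam * trunc_cosh lam N n"
proof (cases "\<bar>n\<bar> \<le> N")
  case True
  have "trunc_cosh lam N (n + 1) + trunc_cosh lam N (n - 1) \<le> cosh (lam * (n + 1)) + cosh (lam * (n - 1))"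
    using trunc_cosh_le_cosh[OF lam N, of "n + 1"] trunc_cosh_le_cosh[OF lam N, of "n - 1"] by simp
  also have "\<dots> = 2 * cosh lam * cosh (lam * n)"
    by (simp add: distrib_left right_diff_distrib cosh_add cosh_diff)
  finally show ?thesis using trunc_cosh_eq_cosh[OF lam True] by simp
next
  case False
  hence eq: "trunc_cosh lam N n = cosh (lam * N)" unfolding trunc_cosh_def by simp
  have "trunc_cosh lam N (n + 1) + trunc_cosh lam N (n - 1) \<le> 2 * cosh (lam * N)"
    using trunc_cosh_le_cap[OF lam N, of "n + 1"] trunc_cosh_le_cap[OF lam N, of "n - 1"] by simp
  also have "\<dots> \<le> 2 * cosh lam * cosh (lam * N)"
    using cosh_real_ge_1[of lam] by simp
  finally show ?thesis unfolding eq .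
qed

lemma cosh_weight_ge_1: "cosh_weight lam N j \<ge> 1"
  unfolding cosh_weight_def by (rule prod_ge_1) (use trunc_cosh_ge_1 in auto)

lemma cosh_weight_nonneg: "cosh_weight lam N j \<ge> 0"
  using cosh_weight_ge_1[of lam N j] by linarith

lemma cosh_weight_le_cap:
  "lam \<ge> 0 \<Longrightarrow> N \<ge> 0 \<Longrightarrow> cosh_weight lam N (j::int^'d::finite) \<le> cosh (lam * N) ^ CARD('d)"
  unfolding cosh_weight_def
  using prod_mono[of UNIV "\<lambda>k. trunc_cosh lam N (j $ k)" "\<lambda>k. cosh (lam * N)"]
    trunc_cosh_le_cap trunc_cosh_ge_1
  by (simp add: order_trans[OF zero_le_one])

lemma cosh_weight_shift_le:
  assumes lam: "lam \<ge> 0" and N: "N \<ge> 0"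
  shows "cosh_weight lam N (j + axis k 1) + cosh_weight lam N (j - axis k 1)
    \<le> 2 * cosh lam * cosh_weight lam N (j::int^'d::finite)"
proof -
  define P where "P = (\<Prod>l\<in>UNIV - {k}. trunc_cosh lam N (j $ l))"
  have split: "cosh_weight lam N i = trunc_cosh lam N (i $ k) * P"
    if "\<And>l. l \<noteq> k \<Longrightarrow> i $ l = j $ l" for i :: "int^'d"
  proof -
    have "cosh_weight lam N i = trunc_cosh lam N (i $ k) * (\<Prod>l\<in>UNIV - {k}. trunc_cosh lam N (i $ l))"
      unfolding cosh_weight_def by (rule prod.remove) auto
    also have "(\<Prod>l\<in>UNIV - {k}. trunc_cosh lam N (i $ l)) = P"
      unfolding P_def using that by (intro prod.cong) auto
    finally show ?thesis .
  qed
  have P0: "P \<ge> 0"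
    unfolding P_def by (intro prod_nonneg) (use trunc_cosh_ge_1 in \<open>auto intro: order_trans[OF zero_le_one]\<close>)
  have "cosh_weight lam N (j + axis k 1) + cosh_weight lam N (j - axis k 1)
      = (trunc_cosh lam N (j $ k + 1) + trunc_cosh lam N (j $ k - 1)) * P"
    by (subst (1 2) split) (auto simp: axis_def algebra_simps)
  also have "\<dots> \<le> 2 * cosh lam * trunc_cosh lam N (j $ k) * P"
    by (rule mult_right_mono[OF trunc_cosh_shift_le[OF lam N] P0])
  also have "\<dots> = 2 * cosh lam * cosh_weight lam N j"
    by (subst split) auto
  finally show ?thesis .
qed

lemma cosh_weight_le_macdonald_product:
  fixes lam \<mu> z N :: real
  assumes lam: "lam > 0" and mu: "\<mu> > 0" and z: "z > 0" and N: "N \<ge> 0"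
  shows "cosh_weight lam N (j::int^'d::finite)
    \<le> (2 * exp (z * (cosh (2 * lam / \<mu>) - 1))) ^ CARD('d)
      * (\<Prod>k\<in>UNIV. macdonaldK (j $ k * \<mu>) z / macdonaldK 0 z)"
proof -
  define c where "c = 2 * exp (z * (cosh (2 * lam / \<mu>) - 1))"
  have "cosh_weight lam N j \<le> (\<Prod>k\<in>UNIV. c * (macdonaldK (j $ k * \<mu>) z / macdonaldK 0 z))"
    unfolding cosh_weight_def
  proof (rule prod_mono)
    fix k :: 'd
    have "trunc_cosh lam N (j $ k) \<le> cosh (lam * (j $ k))"
      using trunc_cosh_le_cosh lam N by simp
    also have "\<dots> \<le> c * (macdonaldK (j $ k * \<mu>) z / macdonaldK 0 z)"
      unfolding c_def by (rule cosh_le_macdonaldK_ratio[OF lam mu z])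
    finally show "0 \<le> trunc_cosh lam N (j $ k)
        \<and> trunc_cosh lam N (j $ k) \<le> c * (macdonaldK (j $ k * \<mu>) z / macdonaldK 0 z)"
      using trunc_cosh_ge_1[of lam N "j $ k"] by simp
  qed
  thus ?thesis unfolding c_def by (simp only: prod.distrib prod_constant power_mult_distrib)
qed

lemma lat_norm_le_sum_abs: "lat_norm (j::int^'d::finite) \<le> (\<Sum>k\<in>UNIV. \<bar>real_of_int (j $ k)\<bar>)"
  using L2_set_le_sum_abs[of "\<lambda>k. real_of_int (j $ k)" UNIV] unfolding lat_norm_def L2_set_def by simp

lemma abs_component_le_lat_norm: "\<bar>real_of_int ((j::int^'d::finite) $ k)\<bar> \<le> lat_norm j"
  using member_le_L2_set[of UNIV k "\<lambda>k. \<bar>real_of_int (j $ k)\<bar>"] unfolding lat_norm_def L2_set_def by simp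

lemma exp_le_cosh_weight:
  fixes lam N \<rho> :: real
  assumes lam: "lam \<ge> 0" and norm: "\<rho> \<le> lat_norm j" "lat_norm (j::int^'d::finite) \<le> N"
  shows "exp (lam * \<rho>) \<le> 2 ^ CARD('d) * cosh_weight lam N j"
proof -
  have "exp (lam * \<rho>) \<le> exp (lam * (\<Sum>k\<in>UNIV. \<bar>real_of_int (j $ k)\<bar>))"
    using norm lat_norm_le_sum_abs[of j] lam by (simp add: mult_left_mono)
  also have "\<dots> = 2 ^ CARD('d) * (\<Prod>k\<in>UNIV. exp \<bar>lam * j $ k\<bar> / 2)"
    using lam by (simp add: exp_sum sum_distrib_left abs_mult prod_dividef)
  also have "(\<Prod>k\<in>UNIV. exp \<bar>lam * j $ k\<bar> / 2) \<le> cosh_weight lam N j"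
    unfolding cosh_weight_def
  proof (rule prod_mono)
    fix k :: 'd
    have "\<bar>real_of_int (j $ k)\<bar> \<le> N" using abs_component_le_lat_norm[of j k] norm by linarith
    hence "trunc_cosh lam N (j $ k) = cosh (lam * j $ k)" by (intro trunc_cosh_eq_cosh lam) simp
    thus "0 \<le> exp \<bar>lam * j $ k\<bar> / 2 \<and> exp \<bar>lam * j $ k\<bar> / 2 \<le> trunc_cosh lam N (j $ k)"
      using exp_abs_div2_le_cosh by simp
  qed
  finally show ?thesis by simp
qed

subsection \<open>Square-summable lattice functions\<close>

lemma summable_on_real_if_abs_le:
  fixes F G :: "'i \<Rightarrow> real"
  assumes "G summable_on A" "\<And>j. j \<in> A \<Longrightarrow> \<bar>F j\<bar> \<le> G j"
  shows "F summable_on A"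
proof -
  have "(\<lambda>x. \<bar>F x\<bar>) summable_on A"
    by (rule summable_on_comparison_test[OF assms(1)]) (use assms(2) in auto)
  hence "(\<lambda>x. norm (F x)) summable_on A" by simp
  thus ?thesis using summable_on_iff_abs_summable_on_real by blast
qed

lemma abs_infsum_le_real:
  fixes F G :: "'i \<Rightarrow> real"
  assumes G: "G summable_on A" and FG: "\<And>j. j \<in> A \<Longrightarrow> \<bar>F j\<bar> \<le> G j"
  shows "\<bar>infsum F A\<bar> \<le> infsum G A"
proof -
  have absF: "(\<lambda>x. norm (F x)) summable_on A"
    using summable_on_comparison_test[OF G, of "\<lambda>x. \<bar>F x\<bar>"] FG by simp
  have "\<bar>infsum F A\<bar> \<le> infsum (\<lambda>x. norm (F x)) A"
    using norm_infsum_bound[of F A] absF by simp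
  also have "\<dots> \<le> infsum G A"
    by (rule infsum_mono[OF absF G]) (use FG in auto)
  finally show ?thesis .
qed

lemma infsum_lincomb3:
  fixes a b c :: "'i \<Rightarrow> real"
  assumes "a summable_on A" "b summable_on A" "c summable_on A"
  shows "infsum (\<lambda>j. x * a j + y * b j + z * c j) A = x * infsum a A + y * infsum b A + z * infsum c A"
proof -
  have s: "(\<lambda>j. x * a j) summable_on A" "(\<lambda>j. y * b j) summable_on A" "(\<lambda>j. z * c j) summable_on A"
    using assms by (auto intro: summable_on_cmult_right)
  have "infsum (\<lambda>j. x * a j + y * b j + z * c j) A
      = infsum (\<lambda>j. x * a j) A + infsum (\<lambda>j. y * b j) A + infsum (\<lambda>j. z * c j) A"
    using s by (simp add: infsum_add summable_on_add)
  thus ?thesis by (simp add: infsum_cmult_right assms)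
qed

lemma infsum_sum_finite:
  fixes f :: "'k \<Rightarrow> 'i \<Rightarrow> real"
  assumes "finite S" "\<And>k. k \<in> S \<Longrightarrow> f k summable_on A"
  shows "(\<lambda>j. \<Sum>k\<in>S. f k j) summable_on A"
    and "infsum (\<lambda>j. \<Sum>k\<in>S. f k j) A = (\<Sum>k\<in>S. infsum (f k) A)"
  using assms by (induction S rule: finite_induct) (auto simp: infsum_add summable_on_add)

lemma cmod_add_square_le: "(cmod (a + b))\<^sup>2 \<le> 2 * (cmod a)\<^sup>2 + 2 * (cmod b)\<^sup>2"
proof -
  have "(cmod (a + b))\<^sup>2 \<le> (cmod a + cmod b)\<^sup>2" by (simp add: norm_triangle_ineq power_mono)
  also have "\<dots> \<le> 2 * (cmod a)\<^sup>2 + 2 * (cmod b)\<^sup>2"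
    using sum_squares_bound[of "cmod a" "cmod b"] by (simp add: power2_sum)
  finally show ?thesis .
qed

lemma Re_cnj_mult_le: "2 * Re (cnj a * b) \<le> (cmod a)\<^sup>2 + (cmod b)\<^sup>2"
proof -
  have "(cmod a)\<^sup>2 + (cmod b)\<^sup>2 - 2 * Re (cnj a * b) = (cmod (a - b))\<^sup>2"
    by (simp add: cmod_power2 power2_diff algebra_simps)
  moreover have "(cmod (a - b))\<^sup>2 \<ge> 0" by simp
  ultimately show ?thesis by linarith
qed

lemma abs_Re_cnj_mult_le: "\<bar>Re (cnj a * b)\<bar> \<le> cmod a * cmod b"
  using abs_Re_le_cmod[of "cnj a * b"] by (simp add: norm_mult)

lemma Re_cnj_self: "Re (cnj a * a) = (cmod a)\<^sup>2"
  using cmod_power2[of a] by (simp add: power2_eq_square)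

lemma mult_le_amgm:
  fixes x y \<alpha> :: real
  assumes "\<alpha> > 0"
  shows "x * y \<le> (\<alpha> * x\<^sup>2 + y\<^sup>2 / \<alpha>) / 2"
proof -
  have "0 \<le> (\<alpha> * x - y)\<^sup>2 / \<alpha>" using assms by simp
  also have "(\<alpha> * x - y)\<^sup>2 / \<alpha> = \<alpha> * x\<^sup>2 + y\<^sup>2 / \<alpha> - 2 * x * y"
    using assms by (simp add: field_simps power2_eq_square)
  finally show ?thesis by simp
qed

lemma le_sqrt_mult_if_amgm_bound:
  fixes X a b :: real
  assumes a: "a \<ge> 0" and b: "b \<ge> 0" and H: "\<And>\<alpha>. \<alpha> > 0 \<Longrightarrow> X \<le> (\<alpha> * a + b / \<alpha>) / 2"
  shows "X \<le> sqrt a * sqrt b"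
proof (rule tendsto_lowerbound)
  show "((\<lambda>\<epsilon>. sqrt (a + \<epsilon>) * sqrt (b + \<epsilon>)) \<longlongrightarrow> sqrt a * sqrt b) (at_right 0)"
    by (intro tendsto_eq_intros) auto
  show "\<forall>\<^sub>F \<epsilon> in at_right 0. X \<le> sqrt (a + \<epsilon>) * sqrt (b + \<epsilon>)"
    using eventually_at_right_less[of 0]
  proof (rule eventually_mono)
    fix \<epsilon> :: real assume \<epsilon>: "\<epsilon> > 0"
    define p q where "p = sqrt (a + \<epsilon>)" and "q = sqrt (b + \<epsilon>)"
    have pq: "p > 0" "q > 0" "a + \<epsilon> = p\<^sup>2" "b + \<epsilon> = q\<^sup>2"
      unfolding p_def q_def using a b \<epsilon> by auto
    have \<alpha>: "q / p > 0" using pq by simp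
    have "X \<le> (q / p * a + b / (q / p)) / 2" by (rule H[OF \<alpha>])
    also have "\<dots> \<le> (q / p * (a + \<epsilon>) + (b + \<epsilon>) / (q / p)) / 2"
      using \<alpha> \<epsilon> by (intro divide_right_mono add_mono mult_left_mono) auto
    also have "\<dots> = p * q"
      unfolding pq(3,4) using pq(1,2) by (simp add: field_simps power2_eq_square)
    finally show "X \<le> sqrt (a + \<epsilon>) * sqrt (b + \<epsilon>)" unfolding p_def q_def .
  qed
qed simp

lemma in_l2_lincomb:
  assumes "in_l2 f" "in_l2 g"
  shows "in_l2 (\<lambda>j. a * f j + b * g j)"
  unfolding in_l2_def
proof (rule summable_on_comparison_test)
  show "(\<lambda>j. 2 * (cmod a)\<^sup>2 * (cmod (f j))\<^sup>2 + 2 * (cmod b)\<^sup>2 * (cmod (g j))\<^sup>2) summable_on UNIV"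
    using assms unfolding in_l2_def by (intro summable_on_add summable_on_cmult_right) auto
  show "(cmod (a * f j + b * g j))\<^sup>2 \<le> 2 * (cmod a)\<^sup>2 * (cmod (f j))\<^sup>2 + 2 * (cmod b)\<^sup>2 * (cmod (g j))\<^sup>2"
    for j
    using cmod_add_square_le[of "a * f j" "b * g j"] by (simp add: norm_mult power_mult_distrib)
qed auto

lemma l2norm_square: "(l2norm f)\<^sup>2 = infsum (\<lambda>j. (cmod (f j))\<^sup>2) UNIV"
  unfolding l2norm_def by (simp add: infsum_nonneg)

lemma summable_on_cmod_mult:
  assumes "in_l2 f" "in_l2 g"
  shows "(\<lambda>j. cmod (f j) * cmod (g j)) summable_on UNIV"
proof (rule summable_on_comparison_test)
  show "(\<lambda>j. (cmod (f j))\<^sup>2 + (cmod (g j))\<^sup>2) summable_on UNIV"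
    using assms unfolding in_l2_def by (intro summable_on_add) auto
  show "cmod (f j) * cmod (g j) \<le> (cmod (f j))\<^sup>2 + (cmod (g j))\<^sup>2" for j
  proof -
    have "2 * cmod (f j) * cmod (g j) \<le> (cmod (f j))\<^sup>2 + (cmod (g j))\<^sup>2" by (rule sum_squares_bound)
    moreover have "0 \<le> cmod (f j) * cmod (g j)" by simp
    ultimately show ?thesis by linarith
  qed
qed auto

lemma infsum_cmod_mult_le_l2norm:
  assumes f: "in_l2 f" and g: "in_l2 g"
  shows "infsum (\<lambda>j. cmod (f j) * cmod (g j)) UNIV \<le> l2norm f * l2norm g"
  unfolding l2norm_def
proof (rule le_sqrt_mult_if_amgm_bound)
  fix \<alpha> :: real assume \<alpha>: "\<alpha> > 0"
  define Sf Sg where "Sf = infsum (\<lambda>j. (cmod (f j))\<^sup>2) UNIV" and "Sg = infsum (\<lambda>j. (cmod (g j))\<^sup>2) UNIV"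
  have sf: "(\<lambda>j. (cmod (f j))\<^sup>2) summable_on UNIV" and sg: "(\<lambda>j. (cmod (g j))\<^sup>2) summable_on UNIV"
    using f g unfolding in_l2_def by auto
  have pointwise: "cmod (f j) * cmod (g j) \<le> (\<alpha> / 2) * (cmod (f j))\<^sup>2 + (1 / (2 * \<alpha>)) * (cmod (g j))\<^sup>2"
    for j
  proof -
    have "(\<alpha> * (cmod (f j))\<^sup>2 + (cmod (g j))\<^sup>2 / \<alpha>) / 2
        = (\<alpha> / 2) * (cmod (f j))\<^sup>2 + (1 / (2 * \<alpha>)) * (cmod (g j))\<^sup>2"
      using \<alpha> by (simp add: field_simps)
    thus ?thesis using mult_le_amgm[OF \<alpha>, of "cmod (f j)" "cmod (g j)"] by simp
  qed
  have s: "(\<lambda>j. (\<alpha> / 2) * (cmod (f j))\<^sup>2 + (1 / (2 * \<alpha>)) * (cmod (g j))\<^sup>2) summable_on UNIV"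
    using sf sg by (intro summable_on_add summable_on_cmult_right)
  have "infsum (\<lambda>j. cmod (f j) * cmod (g j)) UNIV
      \<le> infsum (\<lambda>j. (\<alpha> / 2) * (cmod (f j))\<^sup>2 + (1 / (2 * \<alpha>)) * (cmod (g j))\<^sup>2) UNIV"
    by (rule infsum_mono[OF summable_on_cmod_mult[OF f g] s pointwise])
  also have "\<dots> = (\<alpha> / 2) * Sf + (1 / (2 * \<alpha>)) * Sg"
    unfolding Sf_def Sg_def
    by (simp only: infsum_add[OF summable_on_cmult_right[OF sf] summable_on_cmult_right[OF sg]]
        infsum_cmult_right')
  finally show "infsum (\<lambda>j. cmod (f j) * cmod (g j)) UNIV \<le> (\<alpha> * Sf + Sg / \<alpha>) / 2"
    by (simp add: field_simps)
qed (auto intro: infsum_nonneg)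

subsection \<open>Weighted energies\<close>

definition weighted_energy :: "('i \<Rightarrow> real) \<Rightarrow> ('i \<Rightarrow> complex) \<Rightarrow> real" where
  "weighted_energy \<phi> f = infsum (\<lambda>j. \<phi> j * (cmod (f j))\<^sup>2) UNIV"

lemma weighted_energy_nonneg: "(\<And>j. \<phi> j \<ge> 0) \<Longrightarrow> weighted_energy \<phi> f \<ge> 0"
  unfolding weighted_energy_def by (intro infsum_nonneg) simp

lemma summable_on_weighted_square:
  assumes "\<And>j. 0 \<le> \<phi> j" "\<And>j. \<phi> j \<le> B" "in_l2 f"
  shows "(\<lambda>j. \<phi> j * (cmod (f j))\<^sup>2) summable_on UNIV"
proof (rule summable_on_comparison_test)
  show "(\<lambda>j. B * (cmod (f j))\<^sup>2) summable_on UNIV"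
    using assms(3) unfolding in_l2_def by (rule summable_on_cmult_right)
  show "\<phi> j * (cmod (f j))\<^sup>2 \<le> B * (cmod (f j))\<^sup>2" for j
    using assms(2)[of j] by (simp add: mult_right_mono)
qed (use assms(1) in auto)

lemma summable_on_weighted_Re_cnj_mult:
  assumes \<phi>: "\<And>j. 0 \<le> \<phi> j" "\<And>j. \<phi> j \<le> B" and f: "in_l2 f" and g: "in_l2 g"
  shows "(\<lambda>j. 2 * \<phi> j * Re (cnj (f j) * g j)) summable_on UNIV"
proof (rule summable_on_real_if_abs_le)
  show "(\<lambda>j. 2 * B * (cmod (f j) * cmod (g j))) summable_on UNIV"
    using summable_on_cmod_mult[OF f g] by (rule summable_on_cmult_right)
  show "\<bar>2 * \<phi> j * Re (cnj (f j) * g j)\<bar> \<le> 2 * B * (cmod (f j) * cmod (g j))" for j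
    using \<phi>[of j] abs_Re_cnj_mult_le[of "f j" "g j"] by (simp add: abs_mult mult_mono)
qed

lemma cmod_square_diff_quotient:
  fixes a b :: complex and r :: real
  assumes r: "r \<noteq> 0"
  shows "((cmod b)\<^sup>2 - (cmod a)\<^sup>2) / r
    = 2 * Re (cnj a * ((b - a) / of_real r)) + r * (cmod ((b - a) / of_real r))\<^sup>2"
proof -
  define w where "w = (b - a) / of_real r"
  have "b = a + of_real r * w" unfolding w_def using r by simp
  hence "(cmod b)\<^sup>2 = (cmod a)\<^sup>2 + 2 * r * Re (cnj a * w) + r\<^sup>2 * (cmod w)\<^sup>2"
    by (simp add: cmod_power2 power2_sum power_mult_distrib algebra_simps)
  thus ?thesis unfolding w_def[symmetric] using r by (simp add: field_simps power2_eq_square)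
qed

lemma weighted_square_quotient_error_le:
  fixes a b v :: complex and r \<phi> B :: real
  assumes r: "r \<noteq> 0" and \<phi>: "0 \<le> \<phi>" "\<phi> \<le> B"
  defines "q \<equiv> (b - a) / of_real r - v"
  shows "\<bar>\<phi> * ((cmod b)\<^sup>2 - (cmod a)\<^sup>2) / r - 2 * \<phi> * Re (cnj a * v)\<bar>
    \<le> 2 * B * (cmod a * cmod q) + B * \<bar>r\<bar> * (2 * (cmod v)\<^sup>2 + 2 * (cmod q)\<^sup>2)"
proof -
  have "(b - a) / of_real r = v + q" unfolding q_def by simp
  with cmod_square_diff_quotient[OF r, of b a]
  have "\<phi> * ((cmod b)\<^sup>2 - (cmod a)\<^sup>2) / r = \<phi> * (2 * Re (cnj a * (v + q)) + r * (cmod (v + q))\<^sup>2)"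
    by (metis times_divide_eq_right)
  hence "\<phi> * ((cmod b)\<^sup>2 - (cmod a)\<^sup>2) / r - 2 * \<phi> * Re (cnj a * v)
      = 2 * \<phi> * Re (cnj a * q) + \<phi> * r * (cmod (v + q))\<^sup>2"
    by (simp add: algebra_simps)
  also have "\<bar>\<dots>\<bar> \<le> \<bar>2 * \<phi> * Re (cnj a * q)\<bar> + \<bar>\<phi> * r * (cmod (v + q))\<^sup>2\<bar>"
    by (rule abs_triangle_ineq)
  also have "\<bar>2 * \<phi> * Re (cnj a * q)\<bar> \<le> 2 * B * (cmod a * cmod q)"
    using \<phi> abs_Re_cnj_mult_le[of a q] by (simp add: abs_mult mult_mono)
  also have "\<bar>\<phi> * r * (cmod (v + q))\<^sup>2\<bar> \<le> B * \<bar>r\<bar> * (2 * (cmod v)\<^sup>2 + 2 * (cmod q)\<^sup>2)"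
    using \<phi> cmod_add_square_le[of v q] by (simp add: abs_mult mult_mono)
  finally show ?thesis by simp
qed

lemma weighted_energy_quotient_error_le:
  fixes a b v :: "'i \<Rightarrow> complex" and \<phi> :: "'i \<Rightarrow> real"
  assumes \<phi>: "\<And>j. 0 \<le> \<phi> j" "\<And>j. \<phi> j \<le> B"
    and a: "in_l2 a" and b: "in_l2 b" and v: "in_l2 v" and r: "r \<noteq> 0"
  defines "q \<equiv> \<lambda>j. (b j - a j) / of_real r - v j"
  shows "\<bar>(weighted_energy \<phi> b - weighted_energy \<phi> a) / r - infsum (\<lambda>j. 2 * \<phi> j * Re (cnj (a j) * v j)) UNIV\<bar>
    \<le> 2 * B * l2norm a * l2norm q + B * \<bar>r\<bar> * (2 * (l2norm v)\<^sup>2 + 2 * (l2norm q)\<^sup>2)"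
proof -
  have q: "in_l2 q"
    using in_l2_lincomb[OF in_l2_lincomb[OF b a, of "inverse (of_real r)" "- inverse (of_real r)"] v,
        of 1 "-1"]
    unfolding q_def by (simp add: divide_inverse algebra_simps)
  define G where "G j = 2 * B * (cmod (a j) * cmod (q j)) + B * \<bar>r\<bar> * (2 * (cmod (v j))\<^sup>2 + 2 * (cmod (q j))\<^sup>2)"
    for j
  have sums: "(\<lambda>j. cmod (a j) * cmod (q j)) summable_on UNIV" "(\<lambda>j. (cmod (v j))\<^sup>2) summable_on UNIV"
    "(\<lambda>j. (cmod (q j))\<^sup>2) summable_on UNIV"
    using summable_on_cmod_mult[OF a q] v q unfolding in_l2_def by auto
  have "(weighted_energy \<phi> b - weighted_energy \<phi> a) / r - infsum (\<lambda>j. 2 * \<phi> j * Re (cnj (a j) * v j)) UNIV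
      = infsum (\<lambda>j. (1 / r) * (\<phi> j * (cmod (b j))\<^sup>2) + (- 1 / r) * (\<phi> j * (cmod (a j))\<^sup>2)
                   + (- 1) * (2 * \<phi> j * Re (cnj (a j) * v j))) UNIV"
    unfolding weighted_energy_def
    using summable_on_weighted_square[OF \<phi>] summable_on_weighted_Re_cnj_mult[OF \<phi> a v] a b
    by (subst infsum_lincomb3) (auto simp: diff_divide_distrib)
  also have "\<dots> = infsum (\<lambda>j. \<phi> j * ((cmod (b j))\<^sup>2 - (cmod (a j))\<^sup>2) / r - 2 * \<phi> j * Re (cnj (a j) * v j)) UNIV"
    by (intro infsum_cong) (simp add: diff_divide_distrib right_diff_distrib)
  also have "\<bar>\<dots>\<bar> \<le> infsum G UNIV"
    using sums weighted_square_quotient_error_le[OF r \<phi>] unfolding G_def q_def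
    by (intro abs_infsum_le_real summable_on_add summable_on_cmult_right) auto
  also have "infsum G UNIV = infsum (\<lambda>j. (2 * B) * (cmod (a j) * cmod (q j))
      + (2 * B * \<bar>r\<bar>) * (cmod (v j))\<^sup>2 + (2 * B * \<bar>r\<bar>) * (cmod (q j))\<^sup>2) UNIV"
    unfolding G_def by (intro infsum_cong) (simp add: algebra_simps)
  also have "\<dots> = 2 * B * infsum (\<lambda>j. cmod (a j) * cmod (q j)) UNIV
      + B * \<bar>r\<bar> * (2 * (l2norm v)\<^sup>2 + 2 * (l2norm q)\<^sup>2)"
    unfolding infsum_lincomb3[OF sums] l2norm_square by (simp add: algebra_simps)
  also have "\<dots> \<le> 2 * B * l2norm a * l2norm q + B * \<bar>r\<bar> * (2 * (l2norm v)\<^sup>2 + 2 * (l2norm q)\<^sup>2)"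
    using infsum_cmod_mult_le_l2norm[OF a q] \<phi>(1,2)[of undefined]
    by (simp add: mult.assoc mult_left_mono)
  finally show ?thesis .
qed

lemma has_real_derivative_weighted_energy:
  fixes u u' :: "real \<Rightarrow> 'i \<Rightarrow> complex" and \<phi> :: "'i \<Rightarrow> real"
  assumes \<phi>: "\<And>j. 0 \<le> \<phi> j" "\<And>j. \<phi> j \<le> B"
    and l2u: "\<And>s. s \<in> S \<Longrightarrow> in_l2 (u s)" and l2u': "in_l2 (u' t)"
    and diff: "((\<lambda>s. l2norm (\<lambda>j. (u s j - u t j) / complex_of_real (s - t) - u' t j)) \<longlongrightarrow> 0)
      (at t within S)"
    and t: "t \<in> S"
  shows "((\<lambda>s. weighted_energy \<phi> (u s)) has_real_derivative
          infsum (\<lambda>j. 2 * \<phi> j * Re (cnj (u t j) * u' t j)) UNIV) (at t within S)"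
proof -
  define D where "D = infsum (\<lambda>j. 2 * \<phi> j * Re (cnj (u t j) * u' t j)) UNIV"
  define e where "e s = l2norm (\<lambda>j. (u s j - u t j) / complex_of_real (s - t) - u' t j)" for s
  define g where "g s = 2 * B * l2norm (u t) * e s + B * \<bar>s - t\<bar> * (2 * (l2norm (u' t))\<^sup>2 + 2 * (e s)\<^sup>2)"
    for s
  have "(g \<longlongrightarrow> 2 * B * l2norm (u t) * 0 + B * \<bar>t - t\<bar> * (2 * (l2norm (u' t))\<^sup>2 + 2 * 0\<^sup>2))
      (at t within S)"
    unfolding g_def using diff unfolding e_def[symmetric] by (intro tendsto_intros)
  hence "(g \<longlongrightarrow> 0) (at t within S)" by simp
  moreover have "\<forall>\<^sub>F s in at t within S. norm ((weighted_energy \<phi> (u s) - weighted_energy \<phi> (u t)) / (s - t) - D) \<le> g s"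
    unfolding eventually_at_filter
  proof (intro always_eventually allI impI)
    fix s assume "s \<noteq> t" "s \<in> S"
    hence "s - t \<noteq> 0" by simp
    from weighted_energy_quotient_error_le[OF \<phi> l2u[OF t] l2u[OF \<open>s \<in> S\<close>] l2u' this]
    show "norm ((weighted_energy \<phi> (u s) - weighted_energy \<phi> (u t)) / (s - t) - D) \<le> g s"
      unfolding D_def g_def e_def by (simp only: real_norm_def)
  qed
  ultimately have "((\<lambda>s. (weighted_energy \<phi> (u s) - weighted_energy \<phi> (u t)) / (s - t) - D) \<longlongrightarrow> 0)
      (at t within S)"
    by (rule Lim_null_comparison[rotated])
  thus ?thesis unfolding has_field_derivative_iff D_def by (simp add: LIM_zero_iff)
qed

lemma gronwall_unit_interval:
  fixes E D :: "real \<Rightarrow> real" and K :: real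
  assumes der: "\<And>t. t \<in> {0..1} \<Longrightarrow> (E has_real_derivative D t) (at t within {0..1})"
    and le: "\<And>t. t \<in> {0..1} \<Longrightarrow> D t \<le> K * E t"
    and t: "t \<in> {0..1}"
  shows "E t \<le> exp (K * t) * E 0"
proof -
  define g where "g x = exp (- K * x) * E x" for x
  have "continuous (at x within {0..1}) g" if "x \<in> {0..1}" for x
    unfolding g_def by (intro continuous_intros DERIV_continuous[OF der[OF that]])
  hence cont: "continuous_on {0..1} g" using continuous_on_eq_continuous_within by blast
  have "g t \<le> g 0"
  proof (rule DERIV_nonpos_imp_decreasing_open[of 0 t g])
    show "0 \<le> t" using t by simp
    show "continuous_on {0..t} g" by (rule continuous_on_subset[OF cont]) (use t in auto)
    fix x assume x: "0 < x" "x < t"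
    hence x01: "x \<in> {0..1}" using t by auto
    have "at x within {0..1} = at x" using x t by (intro at_within_Icc_at) auto
    hence "(E has_real_derivative D x) (at x)" using der[OF x01] by simp
    hence "(g has_real_derivative exp (- K * x) * (D x - K * E x)) (at x)"
      unfolding g_def by (auto intro!: derivative_eq_intros simp: algebra_simps)
    moreover have "exp (- K * x) * (D x - K * E x) \<le> 0"
      using le[OF x01] by (simp add: mult_nonneg_nonpos)
    ultimately show "\<exists>y. (g has_real_derivative y) (at x) \<and> y \<le> 0" by blast
  qed
  hence "exp (K * t) * (exp (- K * t) * E t) \<le> exp (K * t) * E 0"
    unfolding g_def by (simp add: mult_left_mono)
  thus ?thesis by (simp add: exp_minus field_simps)
qed

subsection \<open>Energy estimate for the discrete equation\<close>

lemma weighted_square_shift: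
  fixes u :: "int^'d::finite \<Rightarrow> complex" and \<phi> :: "int^'d \<Rightarrow> real"
  assumes \<phi>: "\<And>j. 0 \<le> \<phi> j" "\<And>j. \<phi> j \<le> B" and u: "in_l2 u"
  shows "(\<lambda>j. \<phi> j * (cmod (u (j + a)))\<^sup>2) summable_on UNIV"
    and "infsum (\<lambda>j. \<phi> j * (cmod (u (j + a)))\<^sup>2) UNIV = weighted_energy (\<lambda>i. \<phi> (i - a)) u"
proof -
  have bij: "bij_betw (\<lambda>i. i - a) UNIV UNIV"
    by (rule bij_betwI[where g = "\<lambda>i. i + a"]) auto
  have "(\<lambda>i. \<phi> (i - a) * (cmod (u i))\<^sup>2) summable_on UNIV"
    by (rule summable_on_weighted_square) (use \<phi> u in auto)
  thus "(\<lambda>j. \<phi> j * (cmod (u (j + a)))\<^sup>2) summable_on UNIV"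
    using summable_on_reindex_bij_betw[OF bij, of "\<lambda>j. \<phi> j * (cmod (u (j + a)))\<^sup>2"] by simp
  show "infsum (\<lambda>j. \<phi> j * (cmod (u (j + a)))\<^sup>2) UNIV = weighted_energy (\<lambda>i. \<phi> (i - a)) u"
    using infsum_reindex_bij_betw[OF bij, of "\<lambda>j. \<phi> j * (cmod (u (j + a)))\<^sup>2"]
    unfolding weighted_energy_def by simp
qed

lemma infsum_weighted_neighbours_le:
  fixes u :: "int^'d::finite \<Rightarrow> complex" and \<phi> :: "int^'d \<Rightarrow> real"
  assumes \<phi>: "\<And>j. 0 \<le> \<phi> j" "\<And>j. \<phi> j \<le> B"
    and shift: "\<And>j. \<phi> (j + axis k 1) + \<phi> (j - axis k 1) \<le> 2 * c * \<phi> j"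
    and u: "in_l2 u"
  shows "infsum (\<lambda>j. \<phi> j * (cmod (u (j + axis k 1)))\<^sup>2 + \<phi> j * (cmod (u (j - axis k 1)))\<^sup>2) UNIV
    \<le> 2 * c * weighted_energy \<phi> u"
proof -
  have sums: "(\<lambda>i. \<phi> (i - axis k 1) * (cmod (u i))\<^sup>2) summable_on UNIV"
    "(\<lambda>i. \<phi> (i + axis k 1) * (cmod (u i))\<^sup>2) summable_on UNIV"
    "(\<lambda>i. \<phi> i * (cmod (u i))\<^sup>2) summable_on UNIV"
    by (rule summable_on_weighted_square; use \<phi> u in auto)+
  have "infsum (\<lambda>j. \<phi> j * (cmod (u (j + axis k 1)))\<^sup>2 + \<phi> j * (cmod (u (j - axis k 1)))\<^sup>2) UNIV
      = infsum (\<lambda>i. \<phi> (i - axis k 1) * (cmod (u i))\<^sup>2 + \<phi> (i + axis k 1) * (cmod (u i))\<^sup>2) UNIV"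
    using weighted_square_shift[OF \<phi> u, where a = "axis k 1"]
      weighted_square_shift[OF \<phi> u, where a = "- axis k 1"]
      sums(1,2) unfolding weighted_energy_def by (simp add: infsum_add)
  also have "\<dots> \<le> infsum (\<lambda>i. (2 * c) * (\<phi> i * (cmod (u i))\<^sup>2)) UNIV"
  proof (rule infsum_mono)
    show "(\<lambda>i. \<phi> (i - axis k 1) * (cmod (u i))\<^sup>2 + \<phi> (i + axis k 1) * (cmod (u i))\<^sup>2) summable_on UNIV"
      using sums(1,2) by (rule summable_on_add)
    show "(\<lambda>i. (2 * c) * (\<phi> i * (cmod (u i))\<^sup>2)) summable_on UNIV"
      using sums(3) by (rule summable_on_cmult_right)
    show "\<phi> (i - axis k 1) * (cmod (u i))\<^sup>2 + \<phi> (i + axis k 1) * (cmod (u i))\<^sup>2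
        \<le> 2 * c * (\<phi> i * (cmod (u i))\<^sup>2)" for i
      using mult_right_mono[OF shift[of i], of "(cmod (u i))\<^sup>2"] by (simp add: algebra_simps)
  qed
  finally show ?thesis unfolding weighted_energy_def by (simp add: infsum_cmult_right')
qed

lemma weighted_Re_cnj_equation_le:
  fixes u :: "int^'d::finite \<Rightarrow> complex"
  assumes h: "h > 0" and \<phi>0: "\<phi> j \<ge> 0" and VL: "\<bar>V j\<bar> \<le> L"
  shows "2 * \<phi> j * Re (cnj (u j) * (disc_lap h u j + complex_of_real (V j) * u j))
    \<le> 2 * L * (\<phi> j * (cmod (u j))\<^sup>2)
       + (1 / h\<^sup>2) * (\<Sum>k\<in>UNIV. \<phi> j * (cmod (u (j + axis k 1)))\<^sup>2 + \<phi> j * (cmod (u (j - axis k 1)))\<^sup>2)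
       + (- (2 * real CARD('d) / h\<^sup>2)) * (\<phi> j * (cmod (u j))\<^sup>2)"
proof -
  define T where "T k = u (j + axis k 1) - 2 * u j + u (j - axis k 1)" for k
  have lap: "Re (cnj (u j) * disc_lap h u j) = (1 / h\<^sup>2) * (\<Sum>k\<in>UNIV. Re (cnj (u j) * T k))"
  proof -
    have "cnj (u j) * disc_lap h u j = complex_of_real (1 / h\<^sup>2) * (\<Sum>k\<in>UNIV. cnj (u j) * T k)"
      unfolding disc_lap_def T_def by (simp add: sum_distrib_left algebra_simps)
    thus ?thesis by (simp add: Re_sum)
  qed
  have second_difference: "2 * Re (cnj (u j) * T k)
      \<le> (cmod (u (j + axis k 1)))\<^sup>2 + (cmod (u (j - axis k 1)))\<^sup>2 - 2 * (cmod (u j))\<^sup>2" for k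
    using Re_cnj_mult_le[of "u j" "u (j + axis k 1)"] Re_cnj_mult_le[of "u j" "u (j - axis k 1)"]
      Re_cnj_self[of "u j"]
    unfolding T_def by (simp add: algebra_simps)
  have "2 * \<phi> j * Re (cnj (u j) * disc_lap h u j) = (1 / h\<^sup>2) * (\<Sum>k\<in>UNIV. \<phi> j * (2 * Re (cnj (u j) * T k)))"
    unfolding lap by (simp add: sum_distrib_left algebra_simps)
  also have "\<dots> \<le> (1 / h\<^sup>2) * (\<Sum>k\<in>UNIV. \<phi> j * (cmod (u (j + axis k 1)))\<^sup>2
      + \<phi> j * (cmod (u (j - axis k 1)))\<^sup>2 - 2 * (\<phi> j * (cmod (u j))\<^sup>2))"
    using h \<phi>0 mult_left_mono[OF second_difference \<phi>0]
    by (intro mult_left_mono sum_mono) (auto simp: algebra_simps)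
  also have "\<dots> = (1 / h\<^sup>2) * (\<Sum>k\<in>UNIV. \<phi> j * (cmod (u (j + axis k 1)))\<^sup>2 + \<phi> j * (cmod (u (j - axis k 1)))\<^sup>2)
       + (- (2 * real CARD('d) / h\<^sup>2)) * (\<phi> j * (cmod (u j))\<^sup>2)"
    by (simp add: sum_subtractf algebra_simps)
  finally have "2 * \<phi> j * Re (cnj (u j) * disc_lap h u j) \<le> \<dots>" .
  moreover have "2 * \<phi> j * Re (cnj (u j) * (complex_of_real (V j) * u j)) = 2 * V j * (\<phi> j * (cmod (u j))\<^sup>2)"
    by (simp add: Re_cnj_self[symmetric] algebra_simps)
  moreover have "\<dots> \<le> 2 * L * (\<phi> j * (cmod (u j))\<^sup>2)"
    using VL \<phi>0 by (intro mult_right_mono) auto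
  ultimately show ?thesis by (simp add: algebra_simps)
qed

lemma weighted_energy_equation_le:
  fixes u :: "int^'d::finite \<Rightarrow> complex" and V \<phi> :: "int^'d \<Rightarrow> real"
  assumes \<phi>: "\<And>j. 0 \<le> \<phi> j" "\<And>j. \<phi> j \<le> B"
    and shift: "\<And>j k. \<phi> (j + axis k 1) + \<phi> (j - axis k 1) \<le> 2 * c * \<phi> j"
    and u: "in_l2 u" and VL: "\<And>j. \<bar>V j\<bar> \<le> L" and h: "h > 0"
    and rhs: "in_l2 (\<lambda>j. disc_lap h u j + complex_of_real (V j) * u j)"
  shows "infsum (\<lambda>j. 2 * \<phi> j * Re (cnj (u j) * (disc_lap h u j + complex_of_real (V j) * u j))) UNIV
    \<le> (2 * L + 2 * real CARD('d) * (c - 1) / h\<^sup>2) * weighted_energy \<phi> u"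
proof -
  define d where "d = real CARD('d)"
  define E where "E = weighted_energy \<phi> u"
  define X where "X j = \<phi> j * (cmod (u j))\<^sup>2" for j
  define S where "S k j = \<phi> j * (cmod (u (j + axis k 1)))\<^sup>2 + \<phi> j * (cmod (u (j - axis k 1)))\<^sup>2"
    for k j
  have X: "X summable_on UNIV" unfolding X_def by (rule summable_on_weighted_square[OF \<phi> u])
  have S: "S k summable_on UNIV" for k
    unfolding S_def using weighted_square_shift(1)[OF \<phi> u, where a = "- axis k 1"]
    by (intro summable_on_add weighted_square_shift[OF \<phi> u]) simp_all
  have "infsum (\<lambda>j. \<Sum>k\<in>UNIV. S k j) UNIV = (\<Sum>k\<in>UNIV. infsum (S k) UNIV)"
    using S by (intro infsum_sum_finite) auto
  also have "\<dots> \<le> (\<Sum>k\<in>(UNIV::'d set). 2 * c * E)"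
    unfolding S_def E_def using infsum_weighted_neighbours_le[OF \<phi> shift u] by (intro sum_mono)
  finally have neighbours: "infsum (\<lambda>j. \<Sum>k\<in>UNIV. S k j) UNIV \<le> d * (2 * c * E)"
    unfolding d_def by simp
  have SS: "(\<lambda>j. \<Sum>k\<in>UNIV. S k j) summable_on UNIV"
    using S by (intro infsum_sum_finite(1)) auto
  define P where "P j = 2 * L * X j + (1 / h\<^sup>2) * (\<Sum>k\<in>UNIV. S k j) + (- (2 * d / h\<^sup>2)) * X j" for j
  have "infsum (\<lambda>j. 2 * \<phi> j * Re (cnj (u j) * (disc_lap h u j + complex_of_real (V j) * u j))) UNIV
      \<le> infsum P UNIV"
  proof (rule infsum_mono[OF summable_on_weighted_Re_cnj_mult[OF \<phi> u rhs]])
    show "P summable_on UNIV"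
      unfolding P_def using X SS by (intro summable_on_add summable_on_cmult_right)
    show "2 * \<phi> j * Re (cnj (u j) * (disc_lap h u j + complex_of_real (V j) * u j)) \<le> P j" for j
      unfolding P_def X_def S_def d_def by (rule weighted_Re_cnj_equation_le[OF h \<phi>(1) VL])
  qed
  also have "\<dots> = 2 * L * E + (1 / h\<^sup>2) * infsum (\<lambda>j. \<Sum>k\<in>UNIV. S k j) UNIV + (- (2 * d / h\<^sup>2)) * E"
    unfolding P_def E_def weighted_energy_def X_def[symmetric] by (rule infsum_lincomb3[OF X SS X])
  also have "\<dots> \<le> 2 * L * E + (1 / h\<^sup>2) * (d * (2 * c * E)) + (- (2 * d / h\<^sup>2)) * E"
    using neighbours h by (simp add: divide_right_mono)
  also have "\<dots> = (2 * L + 2 * d * (c - 1) / h\<^sup>2) * E"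
    using h by (simp add: field_simps)
  finally show ?thesis unfolding E_def d_def .
qed

lemma weighted_energy_solution_le:
  fixes u :: "real \<Rightarrow> int^'d::finite \<Rightarrow> complex" and V :: "real \<Rightarrow> int^'d \<Rightarrow> real"
  assumes sol: "is_C1_l2_solution h V u" and h: "h > 0"
    and VL: "\<And>t j. t \<in> {0..1} \<Longrightarrow> \<bar>V t j\<bar> \<le> L"
    and \<phi>: "\<And>j. 0 \<le> \<phi> j" "\<And>j. \<phi> j \<le> B"
    and shift: "\<And>j k. \<phi> (j + axis k 1) + \<phi> (j - axis k 1) \<le> 2 * c * \<phi> j"
    and t: "t \<in> {0..1}"
  shows "weighted_energy \<phi> (u t)
    \<le> exp ((2 * L + 2 * real CARD('d) * (c - 1) / h\<^sup>2) * t) * weighted_energy \<phi> (u 0)"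
proof -
  obtain u' where l2: "\<And>t. t \<in> {0..1} \<Longrightarrow> in_l2 (u t) \<and> in_l2 (u' t)"
    and diff: "\<And>t. t \<in> {0..1} \<Longrightarrow>
      ((\<lambda>s. l2norm (\<lambda>j. (u s j - u t j) / complex_of_real (s - t) - u' t j)) \<longlongrightarrow> 0) (at t within {0..1})"
    and eq: "\<And>t j. t \<in> {0..1} \<Longrightarrow> u' t j = disc_lap h (u t) j + complex_of_real (V t j) * u t j"
    using sol unfolding is_C1_l2_solution_def by blast
  show ?thesis
  proof (rule gronwall_unit_interval[OF _ _ t])
    fix s :: real assume s: "s \<in> {0..1}"
    show "((\<lambda>s. weighted_energy \<phi> (u s)) has_real_derivative
        infsum (\<lambda>j. 2 * \<phi> j * Re (cnj (u s j) * u' s j)) UNIV) (at s within {0..1})"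
      using l2 s by (intro has_real_derivative_weighted_energy[OF \<phi>, where u = u and u' = u'] diff) auto
    have u': "u' s = (\<lambda>j. disc_lap h (u s) j + complex_of_real (V s j) * u s j)"
      using eq[OF s] by auto
    show "infsum (\<lambda>j. 2 * \<phi> j * Re (cnj (u s j) * u' s j)) UNIV
        \<le> (2 * L + 2 * real CARD('d) * (c - 1) / h\<^sup>2) * weighted_energy \<phi> (u s)"
      unfolding u' using l2[OF s] u' VL[OF s] by (intro weighted_energy_equation_le[OF \<phi> shift _ _ h]) auto
  qed
qed

subsection \<open>Choice of the weight parameter\<close>

text \<open>\<open>gain_exponent d \<mu> \<lambda> ((R - 2) h) / h\<^sup>2\<close> is the net gain of the weight \<open>cosh_weight \<lambda> ((R + 1)/h)\<close>
  in dimension \<open>d\<close>: the exponent \<open>\<lambda> (R - 2)/h\<close> it reaches on the annulus, minus the Gronwall loss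
  \<open>2d (cosh \<lambda> - 1)/h\<^sup>2\<close> and the loss \<open>(2d/(e h\<^sup>2)) (cosh (2\<lambda>/\<mu>) - 1)\<close> incurred when comparing it with the
  Macdonald weights at \<open>z = 2/(e h\<^sup>2)\<close>.\<close>

definition gain_exponent :: "real \<Rightarrow> real \<Rightarrow> real \<Rightarrow> real \<Rightarrow> real" where
  "gain_exponent d \<mu> lam H = lam * H - 2 * d * (cosh lam - 1) - (2 * d / exp 1) * (cosh (2 * lam / \<mu>) - 1)"

lemma mult_ln_le_ln_one_plus_mult:
  fixes y \<epsilon> :: real
  assumes y: "y > 0" and \<epsilon>: "0 < \<epsilon>" "\<epsilon> \<le> 1"
  shows "\<epsilon> * ln y \<le> ln (1 + \<epsilon> * y)"
proof -
  have "exp ((1 - \<epsilon>) * 0 + \<epsilon> * ln y) \<le> (1 - \<epsilon>) * exp 0 + \<epsilon> * exp (ln y)"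
    using convex_onD[OF exp_convex, of \<epsilon> 0 "ln y"] \<epsilon> by auto
  hence "exp (\<epsilon> * ln y) \<le> 1 + \<epsilon> * y" using y \<epsilon> by simp
  thus ?thesis using y \<epsilon> by (subst ln_ge_iff) (auto intro: add_pos_nonneg)
qed

lemma cosh_ln_one_plus_minus_1:
  fixes x :: real
  assumes "x \<ge> 0"
  shows "cosh (ln (1 + x)) - 1 = x\<^sup>2 / (2 * (1 + x))"
  using assms by (simp add: cosh_ln_real field_simps power2_eq_square)

lemma gain_exponent_ge:
  fixes \<mu> d y H :: real
  defines "m \<equiv> min 1 (\<mu> / 2)"
  defines "a \<equiv> m / (2 * \<mu>)"
  defines "\<epsilon> \<equiv> min 1 (a / (3 * d))"
  assumes mu: "\<mu> > 0" and d: "d \<ge> 1" and y: "y > 0" and H: "H \<ge> y / (2 * \<mu>)"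
  shows "(a * \<epsilon> / 2) * (y * ln y) \<le> gain_exponent d \<mu> (m * ln (1 + \<epsilon> * y)) H"
proof -
  define s where "s = ln (1 + \<epsilon> * y)"
  have m: "m > 0" "m \<le> 1" "m \<le> \<mu> / 2" using mu unfolding m_def by auto
  have a: "a > 0" unfolding a_def using m mu by simp
  have \<epsilon>: "\<epsilon> > 0" "\<epsilon> \<le> 1" "\<epsilon> \<le> a / (3 * d)" unfolding \<epsilon>_def using a d by auto
  have \<epsilon>y: "\<epsilon> * y > 0" using \<epsilon> y by simp
  have s0: "s \<ge> 0" unfolding s_def using \<epsilon>y by simp
  have c1: "cosh (m * s) \<le> cosh s"
    using m s0 by (intro cosh_mono_abs) (simp add: abs_mult mult_left_le_one_le)
  have "(2 * m) * s \<le> \<mu> * s" using m s0 by (intro mult_right_mono) auto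
  hence c2: "cosh (2 * (m * s) / \<mu>) \<le> cosh s"
    using m mu s0 by (intro cosh_mono_abs) (simp add: abs_mult divide_simps ac_simps)
  have e: "2 * d / exp 1 \<le> d"
    using d exp_ge_add_one_self[of 1] by (simp add: divide_simps)
  have "(2 * d / exp 1) * (cosh (2 * (m * s) / \<mu>) - 1) \<le> d * (cosh s - 1)"
    using mult_mono[OF e, of "cosh (2 * (m * s) / \<mu>) - 1" "cosh s - 1"] c2 d
      cosh_real_ge_1[of "2 * (m * s) / \<mu>"] by simp
  moreover have "2 * d * (cosh (m * s) - 1) \<le> 2 * d * (cosh s - 1)" using c1 d by simp
  ultimately have loss: "2 * d * (cosh (m * s) - 1) + (2 * d / exp 1) * (cosh (2 * (m * s) / \<mu>) - 1)
      \<le> 3 * d * (cosh s - 1)"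
    by simp
  have "3 * d * (cosh s - 1) = (3 * d * \<epsilon>) * (y * (\<epsilon> * y / (1 + \<epsilon> * y))) / 2"
    unfolding s_def cosh_ln_one_plus_minus_1[OF less_imp_le[OF \<epsilon>y]] using \<epsilon>y
    by (simp add: field_simps power2_eq_square)
  also have "\<dots> \<le> a * (y * s) / 2"
    using \<epsilon> a d \<epsilon>y y ln_add1_ge[of "\<epsilon> * y"] unfolding s_def
    by (intro divide_right_mono mult_mono) (auto simp: field_simps)
  finally have half1: "3 * d * (cosh s - 1) \<le> a * s * y / 2" by (simp add: ac_simps)
  have "\<epsilon> * ln y \<le> s" unfolding s_def using mult_ln_le_ln_one_plus_mult[OF y \<epsilon>(1,2)] .
  hence half2: "(a * \<epsilon> / 2) * (y * ln y) \<le> a * s * y / 2"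
    using mult_left_mono[of "\<epsilon> * ln y" s "a * y"] a y by (simp add: algebra_simps)
  have "a * s * y \<le> m * s * H"
    using mult_left_mono[OF H, of "m * s"] m s0 mu unfolding a_def by (simp add: field_simps)
  thus ?thesis unfolding gain_exponent_def s_def[symmetric] using loss half1 half2 by linarith
qed

lemma gain_exponent_decay:
  fixes \<mu> d :: real
  assumes mu: "\<mu> > 0" and d: "d \<ge> 1"
  obtains c0 where "c0 > 0"
    and "\<And>h R. h > 0 \<Longrightarrow> R \<ge> 4 \<Longrightarrow> \<exists>lam > 0.
      - gain_exponent d \<mu> lam ((R - 2) * h) / h\<^sup>2 \<le> - \<mu> * c0 * (R / h * ln (R * h) + R / h * ln \<mu>)"
proof
  define m where "m = min 1 (\<mu> / 2)"
  define a where "a = m / (2 * \<mu>)"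
  define \<epsilon> where "\<epsilon> = min 1 (a / (3 * d))"
  have m: "m > 0" and a: "a > 0" and \<epsilon>: "\<epsilon> > 0"
    unfolding m_def a_def \<epsilon>_def using mu d by auto
  show "a * \<epsilon> / 2 > 0" using a \<epsilon> by simp
  fix h R :: real assume h: "h > 0" and R: "R \<ge> 4"
  define y where "y = R * h * \<mu>"
  have y: "y > 0" unfolding y_def using h R mu by simp
  have "y / (2 * \<mu>) \<le> (R - 2) * h" unfolding y_def using h R mu by (simp add: field_simps)
  from gain_exponent_ge[OF mu d y this]
  have "- gain_exponent d \<mu> (m * ln (1 + \<epsilon> * y)) ((R - 2) * h) / h\<^sup>2 \<le> - (a * \<epsilon> / 2) * (y * ln y) / h\<^sup>2"
    unfolding m_def[symmetric] a_def[symmetric] \<epsilon>_def[symmetric] by (intro divide_right_mono) auto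
  also have "\<dots> = - \<mu> * (a * \<epsilon> / 2) * (R / h * ln (R * h) + R / h * ln \<mu>)"
    unfolding y_def using h R mu by (simp add: ln_mult field_simps power2_eq_square)
  finally have "- gain_exponent d \<mu> (m * ln (1 + \<epsilon> * y)) ((R - 2) * h) / h\<^sup>2
      \<le> - \<mu> * (a * \<epsilon> / 2) * (R / h * ln (R * h) + R / h * ln \<mu>)" .
  moreover have "m * ln (1 + \<epsilon> * y) > 0" using m \<epsilon> y by (simp add: ln_gt_zero)
  ultimately show "\<exists>lam > 0. - gain_exponent d \<mu> lam ((R - 2) * h) / h\<^sup>2
      \<le> - \<mu> * (a * \<epsilon> / 2) * (R / h * ln (R * h) + R / h * ln \<mu>)"
    by blast
qed

subsection \<open>Decay on annuli\<close>

lemma summable_on_cosh_weight_square: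
  "lam \<ge> 0 \<Longrightarrow> N \<ge> 0 \<Longrightarrow> in_l2 f \<Longrightarrow>
    (\<lambda>j. cosh_weight lam N j * (cmod (f j))\<^sup>2) summable_on UNIV"
  by (rule summable_on_weighted_square[OF cosh_weight_nonneg cosh_weight_le_cap])

lemma weighted_energy_le_macdonald_weighted:
  fixes f :: "int^'d::finite \<Rightarrow> complex" and w :: "int^'d \<Rightarrow> real" and lam \<mu> z N :: real
  defines "W \<equiv> \<lambda>j. \<Prod>k\<in>UNIV. macdonaldK (j $ k * \<mu>) z / macdonaldK 0 z"
  assumes lam: "lam > 0" and mu: "\<mu> > 0" and z: "z > 0" and N: "N \<ge> 0" and f: "in_l2 f"
    and fw: "\<And>j. (cmod (f j))\<^sup>2 \<le> w j"
    and summable: "(\<lambda>j. W j * w j) summable_on UNIV"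
  shows "weighted_energy (cosh_weight lam N) f
    \<le> (2 * exp (z * (cosh (2 * lam / \<mu>) - 1))) ^ CARD('d) * infsum (\<lambda>j. W j * w j) UNIV"
proof -
  define M where "M = (2 * exp (z * (cosh (2 * lam / \<mu>) - 1))) ^ CARD('d)"
  have pointwise: "cosh_weight lam N j * (cmod (f j))\<^sup>2 \<le> M * (W j * w j)" for j
  proof -
    have weight: "cosh_weight lam N j \<le> M * W j"
      unfolding M_def W_def by (rule cosh_weight_le_macdonald_product[OF lam mu z N])
    have "cosh_weight lam N j * (cmod (f j))\<^sup>2 \<le> M * W j * (cmod (f j))\<^sup>2"
      using weight by (rule mult_right_mono) simp
    also have "\<dots> \<le> M * W j * w j"
      using fw[of j] weight cosh_weight_nonneg[of lam N j] by (intro mult_left_mono) auto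
    finally show ?thesis by (simp add: mult.assoc)
  qed
  have "weighted_energy (cosh_weight lam N) f \<le> infsum (\<lambda>j. M * (W j * w j)) UNIV"
    unfolding weighted_energy_def using lam N f summable
    by (intro infsum_mono pointwise summable_on_cmult_right summable_on_cosh_weight_square) auto
  thus ?thesis unfolding M_def by (simp add: infsum_cmult_right')
qed

lemma annulus_sum_le_weighted_energy:
  fixes f :: "int^'d::finite \<Rightarrow> complex"
  assumes lam: "lam \<ge> 0" and N: "N \<ge> 0" and f: "in_l2 f"
    and A: "\<And>j. j \<in> A \<Longrightarrow> \<rho> \<le> lat_norm j \<and> lat_norm j \<le> N"
  shows "(\<Sum>j\<in>A. (cmod (f j))\<^sup>2) \<le> 2 ^ CARD('d) * exp (- lam * \<rho>) * weighted_energy (cosh_weight lam N) f"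
proof (cases "finite A")
  case True
  define c where "c = 2 ^ CARD('d) * exp (- lam * \<rho>)"
  have "(\<Sum>j\<in>A. (cmod (f j))\<^sup>2) \<le> (\<Sum>j\<in>A. c * (cosh_weight lam N j * (cmod (f j))\<^sup>2))"
  proof (rule sum_mono)
    fix j assume "j \<in> A"
    hence "exp (lam * \<rho>) \<le> 2 ^ CARD('d) * cosh_weight lam N j"
      using A by (intro exp_le_cosh_weight lam) auto
    hence "1 \<le> c * cosh_weight lam N j"
      unfolding c_def by (simp add: exp_minus field_simps)
    thus "(cmod (f j))\<^sup>2 \<le> c * (cosh_weight lam N j * (cmod (f j))\<^sup>2)"
      using mult_right_mono[of 1 "c * cosh_weight lam N j" "(cmod (f j))\<^sup>2"] by (simp add: mult.assoc)
  qed
  also have "\<dots> \<le> c * weighted_energy (cosh_weight lam N) f"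
    unfolding weighted_energy_def sum_distrib_left[symmetric] c_def
    using summable_on_cosh_weight_square[OF lam N f] True
    by (intro mult_left_mono finite_sum_le_infsum) (auto intro!: mult_nonneg_nonneg cosh_weight_nonneg)
  finally show ?thesis unfolding c_def .
qed (simp add: weighted_energy_nonneg cosh_weight_nonneg)

lemma integral_le_of_le_const:
  fixes f :: "real \<Rightarrow> real"
  assumes f: "\<And>t. t \<in> {a..b} \<Longrightarrow> f t \<le> Q" and Q: "Q \<ge> 0" and ab: "a \<le> b"
  shows "integral {a..b} f \<le> Q * (b - a)"
proof (cases "f integrable_on {a..b}")
  case True
  hence "integral {a..b} f \<le> integral {a..b} (\<lambda>t. Q)" using f by (intro integral_le) auto
  thus ?thesis using ab by (simp add: mult.commute)
qed (use Q ab in \<open>simp add: not_integrable_integral\<close>)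

lemma cosh_weight_energy_solution_le:
  fixes u :: "real \<Rightarrow> int^'d::finite \<Rightarrow> complex" and V :: "real \<Rightarrow> int^'d \<Rightarrow> real"
    and h L \<mu> lam N B z :: real
  defines "W \<equiv> \<lambda>j. \<Prod>k\<in>UNIV. macdonaldK (j $ k * \<mu>) z / macdonaldK 0 z"
  assumes sol: "is_C1_l2_solution h V u" and h: "h > 0"
    and VL: "\<And>t j. t \<in> {0..1} \<Longrightarrow> \<bar>V t j\<bar> \<le> L"
    and summable: "(\<lambda>j. W j * ((cmod (u 0 j))\<^sup>2 + (cmod (u 1 j))\<^sup>2)) summable_on UNIV"
    and bound: "infsum (\<lambda>j. W j * ((cmod (u 0 j))\<^sup>2 + (cmod (u 1 j))\<^sup>2)) UNIV \<le> B"
    and lam: "lam > 0" and mu: "\<mu> > 0" and z: "z > 0" and N: "N \<ge> 0" and t: "t \<in> {0..1}"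
  shows "weighted_energy (cosh_weight lam N) (u t)
    \<le> exp (2 * L + 2 * real CARD('d) * (cosh lam - 1) / h\<^sup>2)
      * ((2 * exp (z * (cosh (2 * lam / \<mu>) - 1))) ^ CARD('d) * B)"
proof -
  define K where "K = 2 * L + 2 * real CARD('d) * (cosh lam - 1) / h\<^sup>2"
  define M where "M = (2 * exp (z * (cosh (2 * lam / \<mu>) - 1))) ^ CARD('d)"
  have "\<bar>V 0 j\<bar> \<le> L" for j by (rule VL) simp
  hence "L \<ge> 0" by (meson abs_ge_zero order_trans)
  hence K: "K \<ge> 0"
    unfolding K_def using cosh_real_ge_1[of lam]
    by (intro add_nonneg_nonneg divide_nonneg_nonneg mult_nonneg_nonneg) auto
  have l2: "in_l2 (u s)" if "s \<in> {0..1}" for s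
    using sol that unfolding is_C1_l2_solution_def by blast
  have "weighted_energy (cosh_weight lam N) (u 0)
      \<le> M * infsum (\<lambda>j. W j * ((cmod (u 0 j))\<^sup>2 + (cmod (u 1 j))\<^sup>2)) UNIV"
    unfolding M_def W_def using summable unfolding W_def
    by (intro weighted_energy_le_macdonald_weighted lam mu z N l2) auto
  also have "\<dots> \<le> M * B" unfolding M_def by (intro mult_left_mono bound) simp
  finally have E0: "weighted_energy (cosh_weight lam N) (u 0) \<le> M * B" .
  have "weighted_energy (cosh_weight lam N) (u t) \<le> exp (K * t) * weighted_energy (cosh_weight lam N) (u 0)"
    unfolding K_def using cosh_weight_shift_le[of lam N] cosh_weight_le_cap[of lam N] lam N
    by (intro weighted_energy_solution_le[OF sol h VL cosh_weight_nonneg _ _ t]) auto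
  also have "\<dots> \<le> exp K * (M * B)"
  proof (rule mult_mono[OF _ E0])
    show "exp (K * t) \<le> exp K" using K t by (simp add: mult_right_le_one_le)
  qed (simp_all add: weighted_energy_nonneg cosh_weight_nonneg)
  finally show ?thesis unfolding K_def M_def .
qed

lemma annulus_sum_solution_le:
  fixes u :: "real \<Rightarrow> int^'d::finite \<Rightarrow> complex" and V :: "real \<Rightarrow> int^'d \<Rightarrow> real"
    and h L \<mu> lam R B :: real
  defines "z \<equiv> 2 / (exp 1 * h\<^sup>2)"
  defines "W \<equiv> \<lambda>j. \<Prod>k\<in>UNIV. macdonaldK (j $ k * \<mu>) z / macdonaldK 0 z"
  assumes sol: "is_C1_l2_solution h V u" and h: "h > 0"
    and VL: "\<And>t j. t \<in> {0..1} \<Longrightarrow> \<bar>V t j\<bar> \<le> L"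
    and summable: "(\<lambda>j. W j * ((cmod (u 0 j))\<^sup>2 + (cmod (u 1 j))\<^sup>2)) summable_on UNIV"
    and bound: "infsum (\<lambda>j. W j * ((cmod (u 0 j))\<^sup>2 + (cmod (u 1 j))\<^sup>2)) UNIV \<le> B"
    and lam: "lam > 0" and mu: "\<mu> > 0" and R: "R > 1" and t: "t \<in> {0..1}"
  shows "(\<Sum>j\<in>{j. R - 2 < h * lat_norm j \<and> h * lat_norm j < R + 1}. (cmod (u t j))\<^sup>2)
    \<le> 4 ^ CARD('d) * exp (2 * L) * B * exp (- gain_exponent (real CARD('d)) \<mu> lam ((R - 2) * h) / h\<^sup>2)"
proof -
  define d where "d = real CARD('d)"
  define N where "N = (R + 1) / h"
  have N: "N \<ge> 0" unfolding N_def using h R by simp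
  have M: "(2 * exp (z * (cosh (2 * lam / \<mu>) - 1))) ^ CARD('d)
      = 2 ^ CARD('d) * exp (d * (z * (cosh (2 * lam / \<mu>) - 1)))"
    unfolding d_def by (simp add: power_mult_distrib exp_of_nat_mult)
  have "(\<Sum>j\<in>{j. R - 2 < h * lat_norm j \<and> h * lat_norm j < R + 1}. (cmod (u t j))\<^sup>2)
      \<le> 2 ^ CARD('d) * exp (- lam * ((R - 2) / h)) * weighted_energy (cosh_weight lam N) (u t)"
    using lam N sol t h unfolding N_def is_C1_l2_solution_def
    by (intro annulus_sum_le_weighted_energy) (auto simp: field_simps)
  also have "\<dots> \<le> 2 ^ CARD('d) * exp (- lam * ((R - 2) / h))
      * (exp (2 * L + 2 * d * (cosh lam - 1) / h\<^sup>2) * ((2 * exp (z * (cosh (2 * lam / \<mu>) - 1))) ^ CARD('d) * B))"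
    using summable bound h unfolding W_def z_def d_def
    by (intro mult_left_mono cosh_weight_energy_solution_le[OF sol h VL _ _ lam mu _ N t]) auto
  also have "\<dots> = (2 ^ CARD('d) * 2 ^ CARD('d)) * exp (2 * L) * B
      * (exp (- lam * ((R - 2) / h)) * exp (2 * d * (cosh lam - 1) / h\<^sup>2) * exp (d * (z * (cosh (2 * lam / \<mu>) - 1))))"
    unfolding M exp_add[of "2 * L"] by (simp add: field_simps)
  also have "\<dots> = 4 ^ CARD('d) * exp (2 * L) * B
      * exp (- lam * ((R - 2) / h) + 2 * d * (cosh lam - 1) / h\<^sup>2 + d * (z * (cosh (2 * lam / \<mu>) - 1)))"
    by (simp only: exp_add power_mult_distrib[symmetric]) simp
  also have "- lam * ((R - 2) / h) + 2 * d * (cosh lam - 1) / h\<^sup>2 + d * (z * (cosh (2 * lam / \<mu>) - 1))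
      = - gain_exponent d \<mu> lam ((R - 2) * h) / h\<^sup>2"
    unfolding gain_exponent_def z_def using h by (simp add: field_simps power2_eq_square)
  finally show ?thesis unfolding d_def .
qed

lemma annulus_integral_le:
  fixes u :: "real \<Rightarrow> int^'d::finite \<Rightarrow> complex" and V :: "real \<Rightarrow> int^'d \<Rightarrow> real"
    and h L \<mu> lam R A :: real
  defines "z \<equiv> 2 / (exp 1 * h\<^sup>2)"
  defines "W \<equiv> \<lambda>j. \<Prod>k\<in>UNIV. macdonaldK (j $ k * \<mu>) z / macdonaldK 0 z"
  assumes sol: "is_C1_l2_solution h V u" and h: "h > 0"
    and VL: "\<And>t j. t \<in> {0..1} \<Longrightarrow> \<bar>V t j\<bar> \<le> L"
    and summable: "(\<lambda>j. h ^ CARD('d) * W j * ((cmod (u 0 j))\<^sup>2 + (cmod (u 1 j))\<^sup>2)) summable_on UNIV"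
    and bound: "h ^ CARD('d) * infsum (\<lambda>j. W j * ((cmod (u 0 j))\<^sup>2 + (cmod (u 1 j))\<^sup>2)) UNIV \<le> A"
    and lam: "lam > 0" and mu: "\<mu> > 0" and R: "R > 1"
  shows "h ^ CARD('d) * integral {0..1}
      (\<lambda>t. \<Sum>j\<in>{j. R - 2 < h * lat_norm j \<and> h * lat_norm j < R + 1}. (cmod (u t j))\<^sup>2)
    \<le> 4 ^ CARD('d) * exp (2 * L) * \<bar>A\<bar> * exp (- gain_exponent (real CARD('d)) \<mu> lam ((R - 2) * h) / h\<^sup>2)"
proof -
  define hd where "hd = h ^ CARD('d)"
  define st where "st j = (cmod (u 0 j))\<^sup>2 + (cmod (u 1 j))\<^sup>2" for j
  define Q where "Q = 4 ^ CARD('d) * exp (2 * L) * (\<bar>A\<bar> / hd)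
    * exp (- gain_exponent (real CARD('d)) \<mu> lam ((R - 2) * h) / h\<^sup>2)"
  have hd: "hd > 0" unfolding hd_def using h by simp
  have "(\<lambda>j. (1 / hd) * (hd * W j * st j)) summable_on UNIV"
    using summable unfolding hd_def st_def by (rule summable_on_cmult_right)
  hence summable': "(\<lambda>j. W j * st j) summable_on UNIV" using hd by simp
  have bound': "infsum (\<lambda>j. W j * st j) UNIV \<le> \<bar>A\<bar> / hd"
    using bound hd unfolding hd_def[symmetric] st_def by (simp add: field_simps)
  have "integral {0..1} (\<lambda>t. \<Sum>j\<in>{j. R - 2 < h * lat_norm j \<and> h * lat_norm j < R + 1}. (cmod (u t j))\<^sup>2)
      \<le> Q * (1 - 0)"
  proof (rule integral_le_of_le_const)
    show "(\<Sum>j\<in>{j. R - 2 < h * lat_norm j \<and> h * lat_norm j < R + 1}. (cmod (u t j))\<^sup>2) \<le> Q"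
      if "t \<in> {0..1}" for t
      unfolding Q_def using summable' bound' h lam mu R that unfolding W_def st_def z_def
      by (intro annulus_sum_solution_le[OF sol h VL]) auto
    show "Q \<ge> 0" unfolding Q_def using hd by simp
  qed simp
  hence "hd * integral {0..1} (\<lambda>t. \<Sum>j\<in>{j. R - 2 < h * lat_norm j \<and> h * lat_norm j < R + 1}. (cmod (u t j))\<^sup>2)
      \<le> hd * Q"
    using hd by (simp add: mult_left_mono)
  thus ?thesis unfolding Q_def hd_def using h by simp
qed

theorem mainTheorem4:
  fixes u :: "real \<Rightarrow> real \<Rightarrow> int ^ 'd::finite \<Rightarrow> complex"
    and V :: "real \<Rightarrow> real \<Rightarrow> int ^ 'd \<Rightarrow> real"
    and \<mu> L A :: real
  assumes mu_pos: "\<mu> > 0"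
    and sol: "\<And>h. h > 0 \<Longrightarrow> is_C1_l2_solution h (V h) (u h)"
    and V_bdd: "\<And>h t j. h > 0 \<Longrightarrow> t \<in> {0..1} \<Longrightarrow> \<bar>V h t j\<bar> \<le> L"
    and weighted_summable: "\<And>h. h > 0 \<Longrightarrow>
      (\<lambda>j. h ^ CARD('d) * (\<Prod>k\<in>UNIV. macdonaldK (real_of_int (j $ k) * \<mu>) (2 / (exp 1 * h\<^sup>2))
                                       / macdonaldK 0 (2 / (exp 1 * h\<^sup>2)))
            * ((cmod (u h 0 j))\<^sup>2 + (cmod (u h 1 j))\<^sup>2)) summable_on UNIV"
    and weighted_bdd: "\<And>h. h > 0 \<Longrightarrow>
      h ^ CARD('d) * infsum (\<lambda>j. (\<Prod>k\<in>UNIV. macdonaldK (real_of_int (j $ k) * \<mu>) (2 / (exp 1 * h\<^sup>2))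
                                       / macdonaldK 0 (2 / (exp 1 * h\<^sup>2)))
            * ((cmod (u h 0 j))\<^sup>2 + (cmod (u h 1 j))\<^sup>2)) UNIV \<le> A"
  shows "\<exists>h0 > 0. \<exists>c0 > 0. \<exists>C > 0. \<forall>h R. 0 < h \<and> h < h0 \<and> R > 1 \<and> R * h \<ge> 2 / (exp 1 * \<mu>) \<longrightarrow>
      h ^ CARD('d) * integral {0..1} (\<lambda>t. \<Sum>j\<in>{j. R - 2 < h * lat_norm j \<and> h * lat_norm j < R + 1}.
                                           (cmod (u h t j))\<^sup>2)
      \<le> C * exp (- \<mu> * c0 * (R / h * ln (R * h) + R / h * ln \<mu>))"
proof -
  obtain c0 where c0: "c0 > 0" and decay: "\<And>h R. h > 0 \<Longrightarrow> R \<ge> 4 \<Longrightarrow> \<exists>lam > 0.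
      - gain_exponent (real CARD('d)) \<mu> lam ((R - 2) * h) / h\<^sup>2
        \<le> - \<mu> * c0 * (R / h * ln (R * h) + R / h * ln \<mu>)"
    using gain_exponent_decay[OF mu_pos, of "real CARD('d)"] by auto
  define h0 where "h0 = 1 / (2 * exp 1 * \<mu>)"
  define C where "C = 4 ^ CARD('d) * exp (2 * L) * \<bar>A\<bar> + 1"
  have "h ^ CARD('d) * integral {0..1} (\<lambda>t. \<Sum>j\<in>{j. R - 2 < h * lat_norm j \<and> h * lat_norm j < R + 1}.
        (cmod (u h t j))\<^sup>2)
      \<le> C * exp (- \<mu> * c0 * (R / h * ln (R * h) + R / h * ln \<mu>))"
    if h: "0 < h" "h < h0" and R: "R > 1" "R * h \<ge> 2 / (exp 1 * \<mu>)" for h R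
  proof -
    have "4 * h < 4 * h0" using h by simp
    also have "4 * h0 = 2 / (exp 1 * \<mu>)" unfolding h0_def by simp
    finally have "4 * h < R * h" using R by simp
    hence "R \<ge> 4" using h by simp
    then obtain lam where lam: "lam > 0"
      and exponent: "- gain_exponent (real CARD('d)) \<mu> lam ((R - 2) * h) / h\<^sup>2
        \<le> - \<mu> * c0 * (R / h * ln (R * h) + R / h * ln \<mu>)"
      using decay h by blast
    note annulus_integral_le[OF sol[OF h(1)] h(1) V_bdd[OF h(1)] weighted_summable[OF h(1)]
        weighted_bdd[OF h(1)] lam mu_pos R(1)]
    also have "4 ^ CARD('d) * exp (2 * L) * \<bar>A\<bar> * exp (- gain_exponent (real CARD('d)) \<mu> lam ((R - 2) * h) / h\<^sup>2)
        \<le> C * exp (- \<mu> * c0 * (R / h * ln (R * h) + R / h * ln \<mu>))"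
      using exponent unfolding C_def by (intro mult_mono) auto
    finally show ?thesis .
  qed
  moreover have "h0 > 0" "C > 0" unfolding h0_def C_def using mu_pos by (auto intro: add_nonneg_pos)
  ultimately show ?thesis using c0 by blast
qed

end
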